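(* Under the assumptions of Proposition 1 (i.e. i.i.d. $\mathbf{X}_i$, $\mathbb{E}\{\mathbf{g}(\mathbf{X}_i;\boldsymbol\theta_0)\}=\mathbf 0$, $\max_{1\le j\le r}\mathbb{E}\{\sup_{\boldsymbol\theta\in\boldsymbol\Theta}|g_j(\mathbf{X}_i;\boldsymbol\theta)|^{\gamma}\}\le C_1$ with $\gamma>2$, the eigenvalues of $n^{-1}\sum_{i=1}^n\mathbf g(\mathbf X_i;\boldsymbol\theta)\mathbf g(\mathbf X_i;\boldsymbol\theta)^T$ lying uniformly in $\boldsymbol\theta\in\boldsymbol\Theta$ in $[C_2^{-1},C_2]$ with probability tending to one, and $r=o(n^{1/2-1/\gamma})$), one has $$\max_{\boldsymbol\lambda\in\widehat\Lambda_n(\boldsymbol\theta_0)}\frac1n\sum_{i=1}^n\log\{1+\boldsymbol\lambda^{T}\mathbf{g}(\mathbf{X}_i;\boldsymbol\theta_0)\}=O_p(rn^{-1}).$$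
   Context: $\widehat\Lambda_n(\boldsymbol\theta)=\{\boldsymbol\lambda\in\mathbb{R}^r:\boldsymbol\lambda^{T}\mathbf{g}(\mathbf{X}_i;\boldsymbol\theta)\in\mathcal V,\ i=1,\ldots,n\}$ with $\mathcal V$ an open interval containing zero. $C_1>0,C_2>1$ are constants not depending on $n$; $r$ may grow with $n$. *)

theory Defs
  imports "HOL-Probability.Probability" "Jordan_Normal_Form.Char_Poly" "HOL-Library.Landau_Symbols"
begin

text \<open>Vectors in R^r are represented as functions nat => real; only the
coordinates j < r matter (coordinates j >= r are required to vanish for lambda).
The estimating function g n x theta j is the j-th coordinate (j < r n) of
g(x; theta) at sample size n (its dimension r n may grow with n).
The data X n i (i < n) form the n-th row of the sample.\<close>

definition Lambda_hat ::
  "nat \<Rightarrow> nat \<Rightarrow> (nat \<Rightarrow> 'x) \<Rightarrow> ('x \<Rightarrow> 'p \<Rightarrow> nat \<Rightarrow> real) \<Rightarrow> real set \<Rightarrow> 'p \<Rightarrow> (nat \<Rightarrow> real) set"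
  where "Lambda_hat n r x g V \<theta> =
    {l. (\<forall>j\<ge>r. l j = 0) \<and> (\<forall>i<n. (\<Sum>j<r. l j * g (x i) \<theta> j) \<in> V)}"

definition sample_cov ::
  "nat \<Rightarrow> nat \<Rightarrow> (nat \<Rightarrow> 'x) \<Rightarrow> ('x \<Rightarrow> 'p \<Rightarrow> nat \<Rightarrow> real) \<Rightarrow> 'p \<Rightarrow> real mat"
  where "sample_cov n r x g \<theta> =
    mat r r (\<lambda>(j, k). (1 / real n) * (\<Sum>i<n. g (x i) \<theta> j * g (x i) \<theta> k))"

definition el_obj ::
  "nat \<Rightarrow> nat \<Rightarrow> (nat \<Rightarrow> 'x) \<Rightarrow> ('x \<Rightarrow> 'p \<Rightarrow> nat \<Rightarrow> real) \<Rightarrow> 'p \<Rightarrow> (nat \<Rightarrow> real) \<Rightarrow> real"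
  where "el_obj n r x g \<theta> l =
    (1 / real n) * (\<Sum>i<n. ln (1 + (\<Sum>j<r. l j * g (x i) \<theta> j)))"

end

theory Submission
  imports Defs
begin

text \<open>Write \<open>x\<^sub>i = \<lambda>\<^sup>T g(X\<^sub>i)\<close>, let \<open>G\<close> be the mean of the \<open>g(X\<^sub>i)\<close> and \<open>m = |\<lambda>| max\<^sub>i |g(X\<^sub>i)|\<close>,
  so that \<open>x\<^sub>i \<le> m\<close>. From \<open>ln (1 + x) \<le> x - x\<^sup>2 / (2 (1 + m))\<close>, Cauchy-Schwarz for the mean of
  the \<open>x\<^sub>i\<close> and the eigenvalue bound for the mean of the \<open>x\<^sub>i\<^sup>2\<close>, the EL objective is at most
  \<open>|\<lambda>| |G| - |\<lambda>|\<^sup>2 / (2 C\<^sub>2 (1 + m))\<close>, which is at most \<open>C\<^sub>2 |G|\<^sup>2\<close> as soon as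
  \<open>|G| max\<^sub>i |g(X\<^sub>i)|\<close> is small. By independence and the zero mean, \<open>E |G|\<^sup>2 = O(r/n)\<close>; by the
  moment bound and a union bound, \<open>max\<^sub>i |g(X\<^sub>i)|\<^sup>2 = O\<^sub>p(r n\<^bsup>2/\<gamma>\<^esup>)\<close>. The product of the two is
  \<open>O\<^sub>p(r\<^sup>2 n\<^bsup>2/\<gamma> - 1\<^esup>) = o\<^sub>p(1)\<close> by the rate condition on \<open>r\<close>, so with high probability the
  objective is \<open>O(|G|\<^sup>2) = O(r/n)\<close>.\<close>

section \<open>Quadratic forms and their smallest eigenvalue\<close>

definition quad_form :: "nat \<Rightarrow> (nat \<Rightarrow> nat \<Rightarrow> real) \<Rightarrow> (nat \<Rightarrow> real) \<Rightarrow> real" where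
  "quad_form r s w = (\<Sum>j<r. \<Sum>k<r. w j * s j k * w k)"

definition coord_sphere :: "nat \<Rightarrow> (nat \<Rightarrow> real) set" where
  "coord_sphere r = {u. (\<forall>j\<ge>r. u j = 0) \<and> (\<Sum>j<r. (u j)^2) = 1}"

lemma linear_coeff_eq_0_if_quadratic_nonneg:
  fixes a b :: real
  assumes "\<And>t. 0 \<le> a * t + b * t^2"
  shows "a = 0"
proof (rule ccontr)
  assume a: "a \<noteq> 0"
  define B where "B = \<bar>b\<bar> + 1"
  have B: "B > 0" unfolding B_def by (simp add: abs_add_one_gt_zero)
  define t where "t = - a / B"
  have "0 \<le> a * t + b * t^2" by (rule assms)
  also have "a * t + b * t^2 = a^2 / B * (-1 + b / B)"
    using B by (simp add: t_def field_simps power2_eq_square)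
  also have "\<dots> < 0"
  proof (rule mult_pos_neg)
    show "0 < a^2 / B" using a B by simp
    have "b / B < 1" using B by (simp add: B_def)
    then show "-1 + b / B < 0" by simp
  qed
  finally show False by simp
qed

lemma compact_coord_sphere: "compact (coord_sphere r)"
proof -
  have "compactin (product_topology (\<lambda>_. euclideanreal) UNIV) (PiE UNIV (\<lambda>_::nat. {-1..1::real}))"
    by (subst compactin_PiE) auto
  then have box: "compact (PiE UNIV (\<lambda>_::nat. {-1..1::real}))"
    by (simp add: euclidean_product_topology)
  have sub: "coord_sphere r \<subseteq> PiE UNIV (\<lambda>_. {-1..1})"
  proof
    fix u assume u: "u \<in> coord_sphere r"
    have "u j \<in> {-1..1}" for j
    proof (cases "j < r")
      case True
      have "(u j)^2 \<le> (\<Sum>j<r. (u j)^2)"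
        by (rule member_le_sum[of j "{..<r}" "\<lambda>j. (u j)^2"]) (use True in auto)
      then show ?thesis using u by (simp add: coord_sphere_def abs_square_le_1 abs_le_iff)
    next
      case False then show ?thesis using u by (auto simp: coord_sphere_def)
    qed
    then show "u \<in> PiE UNIV (\<lambda>_. {-1..1})" by auto
  qed
  have norm_cont: "continuous_on UNIV (\<lambda>u::nat \<Rightarrow> real. \<Sum>j<r. (u j)^2)"
    by (intro continuous_intros continuous_on_product_coordinates)
  have "closed ((\<Inter>j\<in>{r..}. {u::nat \<Rightarrow> real. u j = 0}) \<inter> {u. (\<Sum>j<r. (u j)^2) = 1})"
    by (intro closed_Int closed_INT ballI closed_Collect_eq continuous_on_product_coordinates
        norm_cont continuous_on_const)
  also have "(\<Inter>j\<in>{r..}. {u::nat \<Rightarrow> real. u j = 0}) \<inter> {u. (\<Sum>j<r. (u j)^2) = 1} = coord_sphere r"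
    by (auto simp: coord_sphere_def)
  finally have "compact (PiE UNIV (\<lambda>_. {-1..1}) \<inter> coord_sphere r)"
    by (rule compact_Int_closed[OF box])
  also have "PiE UNIV (\<lambda>_. {-1..1}) \<inter> coord_sphere r = coord_sphere r"
    using sub by blast
  finally show ?thesis .
qed

lemma quad_form_ge_min_on_coord_sphere:
  assumes u: "u \<in> coord_sphere r"
    and min: "\<And>y. y \<in> coord_sphere r \<Longrightarrow> quad_form r s u \<le> quad_form r s y"
  shows "quad_form r s u * (\<Sum>j<r. (v j)^2) \<le> quad_form r s v"
proof -
  define \<nu> where "\<nu> = sqrt (\<Sum>j<r. (v j)^2)"
  show ?thesis
  proof (cases "\<nu> = 0")
    case True
    then have "\<forall>j\<in>{..<r}. (v j)^2 = 0"
      by (simp add: \<nu>_def sum_nonneg_eq_0_iff)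
    then show ?thesis by (simp add: quad_form_def)
  next
    case False
    have \<nu>2: "\<nu>^2 = (\<Sum>j<r. (v j)^2)" by (simp add: \<nu>_def sum_nonneg)
    define v' where "v' j = (if j < r then v j / \<nu> else 0)" for j
    have pos: "0 < (\<Sum>j<r. (v j)^2)"
      using False by (simp flip: \<nu>2)
    have "(\<Sum>j<r. (v' j)^2) = (\<Sum>j<r. (v j)^2) / \<nu>^2"
      by (simp add: v'_def power_divide sum_divide_distrib)
    then have "v' \<in> coord_sphere r" using pos \<nu>2 by (simp add: coord_sphere_def v'_def)
    then have "quad_form r s u \<le> quad_form r s v'" by (rule min)
    also have "quad_form r s v' = quad_form r s v / \<nu>^2"
      by (simp add: quad_form_def v'_def sum_divide_distrib power2_eq_square)
    finally show ?thesis using pos \<nu>2 by (simp add: pos_le_divide_eq)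
  qed
qed

text \<open>A minimiser \<open>u\<close> of the form \<open>q\<close> on the unit sphere minimises \<open>q(w) - q(u) |w|\<^sup>2\<close> along the line
  \<open>u + t e\<close>, so the derivative in \<open>t\<close> vanishes at \<open>t = 0\<close>.\<close>
lemma coord_sphere_min_critical:
  assumes sym: "\<And>j k. s j k = s k j" and u: "u \<in> coord_sphere r"
    and min: "\<And>y. y \<in> coord_sphere r \<Longrightarrow> quad_form r s u \<le> quad_form r s y"
  shows "(\<Sum>j<r. \<Sum>k<r. u j * s j k * e k) = quad_form r s u * (\<Sum>j<r. u j * e j)"
proof -
  define \<mu> where "\<mu> = quad_form r s u"
  define Bue where "Bue = (\<Sum>j<r. \<Sum>k<r. u j * s j k * e k)"
  have u1: "(\<Sum>j<r. (u j)^2) = 1" using u by (simp add: coord_sphere_def)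
  have Beu: "(\<Sum>j<r. \<Sum>k<r. e j * s j k * u k) = Bue"
    unfolding Bue_def by (subst sum.swap) (simp add: sym mult.commute mult.left_commute)
  have "2 * (Bue - \<mu> * (\<Sum>j<r. u j * e j)) = 0"
  proof (rule linear_coeff_eq_0_if_quadratic_nonneg)
    fix t :: real
    have expand: "quad_form r s (\<lambda>j. u j + t * e j)
        = \<mu> + t * (Bue + (\<Sum>j<r. \<Sum>k<r. e j * s j k * u k)) + t^2 * quad_form r s e"
      unfolding quad_form_def \<mu>_def Bue_def
      by (simp add: algebra_simps power2_eq_square sum.distrib sum_distrib_left)
    have "\<mu> * (\<Sum>j<r. (u j + t * e j)^2) \<le> quad_form r s (\<lambda>j. u j + t * e j)"
      unfolding \<mu>_def by (rule quad_form_ge_min_on_coord_sphere[OF u min])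
    moreover have "(\<Sum>j<r. (u j + t * e j)^2)
        = 1 + 2 * t * (\<Sum>j<r. u j * e j) + t^2 * (\<Sum>j<r. (e j)^2)"
      using u1 by (simp add: algebra_simps power2_eq_square sum.distrib sum_distrib_left)
    ultimately show "0 \<le> 2 * (Bue - \<mu> * (\<Sum>j<r. u j * e j)) * t
        + (quad_form r s e - \<mu> * (\<Sum>j<r. (e j)^2)) * t^2"
      using expand[unfolded Beu] by (simp add: algebra_simps)
  qed
  then show ?thesis by (simp add: Bue_def \<mu>_def)
qed

lemma coord_sphere_min_is_eigenvalue:
  assumes sym: "\<And>j k. s j k = s k j" and u: "u \<in> coord_sphere r"
    and min: "\<And>y. y \<in> coord_sphere r \<Longrightarrow> quad_form r s u \<le> quad_form r s y"
  shows "eigenvalue (mat r r (\<lambda>(j, k). s j k)) (quad_form r s u)"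
proof -
  define \<mu> where "\<mu> = quad_form r s u"
  have "vec r u \<noteq> 0\<^sub>v r"
  proof
    assume "vec r u = 0\<^sub>v r"
    then have "\<And>j. j < r \<Longrightarrow> u j = 0" by (metis index_vec index_zero_vec(1))
    then show False using u by (simp add: coord_sphere_def)
  qed
  moreover have "mat r r (\<lambda>(j, k). s j k) *\<^sub>v vec r u = \<mu> \<cdot>\<^sub>v vec r u"
  proof (rule eq_vecI)
    fix i assume "i < dim_vec (\<mu> \<cdot>\<^sub>v vec r u)"
    then have i: "i < r" by simp
    have "(\<Sum>j<r. \<Sum>k<r. u j * s j k * (if k = i then 1 else 0))
        = \<mu> * (\<Sum>j<r. u j * (if j = i then 1 else 0))"
      unfolding \<mu>_def by (rule coord_sphere_min_critical[OF sym u min])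
    then have "(\<Sum>j<r. s i j * u j) = \<mu> * u i"
      using i by (simp add: sym mult.commute if_distrib[where f="\<lambda>x. _ * x"] cong: if_cong)
    then show "(mat r r (\<lambda>(j, k). s j k) *\<^sub>v vec r u) $ i = (\<mu> \<cdot>\<^sub>v vec r u) $ i"
      using i by (simp add: scalar_prod_def lessThan_atLeast0)
  qed simp
  ultimately show ?thesis
    unfolding \<mu>_def eigenvalue_def eigenvector_def by (auto intro!: exI[of _ "vec r u"])
qed

lemma quad_form_ge_eigenvalue_lower_bound:
  assumes sym: "\<And>j k. s j k = s k j"
    and ev: "\<And>k. eigenvalue (mat r r (\<lambda>(j, k). s j k)) k \<Longrightarrow> c \<le> k"
  shows "c * (\<Sum>j<r. (w j)^2) \<le> quad_form r s w"
proof (cases "r = 0")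
  case True then show ?thesis by (simp add: quad_form_def)
next
  case False
  have "(\<lambda>j. if j = 0 then 1 else 0) \<in> coord_sphere r"
    using False by (simp add: coord_sphere_def if_distrib[where f="\<lambda>x. x^2"] cong: if_cong)
  then have ne: "coord_sphere r \<noteq> {}" by blast
  have "continuous_on UNIV (quad_form r s)"
    unfolding quad_form_def by (intro continuous_intros continuous_on_product_coordinates)
  then obtain u where u: "u \<in> coord_sphere r"
    and min: "\<And>y. y \<in> coord_sphere r \<Longrightarrow> quad_form r s u \<le> quad_form r s y"
    using continuous_attains_inf[OF compact_coord_sphere ne continuous_on_subset] by blast
  have "c \<le> quad_form r s u" by (rule ev[OF coord_sphere_min_is_eigenvalue[OF sym u min]])
  then have "c * (\<Sum>j<r. (w j)^2) \<le> quad_form r s u * (\<Sum>j<r. (w j)^2)"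
    by (intro mult_right_mono) (simp_all add: sum_nonneg)
  also have "\<dots> \<le> quad_form r s w" by (rule quad_form_ge_min_on_coord_sphere[OF u min])
  finally show ?thesis .
qed

lemma quad_form_second_moment:
  fixes G :: "nat \<Rightarrow> nat \<Rightarrow> real"
  shows "quad_form r (\<lambda>j k. (1 / real n) * (\<Sum>i<n. G i j * G i k)) w
    = (1 / real n) * (\<Sum>i<n. (\<Sum>j<r. w j * G i j)^2)"
proof -
  have "(\<Sum>i<n. (\<Sum>j<r. w j * G i j)^2) = (\<Sum>i<n. \<Sum>j<r. \<Sum>k<r. w j * G i j * (w k * G i k))"
    by (simp add: power2_eq_square sum_product)
  also have "\<dots> = (\<Sum>j<r. \<Sum>k<r. \<Sum>i<n. w j * G i j * (w k * G i k))"
    by (subst sum.swap) (rule sum.cong[OF refl], rule sum.swap)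
  finally show ?thesis
    unfolding quad_form_def by (simp add: sum_distrib_left sum_distrib_right mult_ac)
qed

lemma sample_cov_quadratic_lower_bound:
  assumes ev: "\<And>k. eigenvalue (sample_cov n r x g \<theta>) k \<Longrightarrow> c \<le> k"
  shows "c * (\<Sum>j<r. (l j)^2) \<le> (1 / real n) * (\<Sum>i<n. (\<Sum>j<r. l j * g (x i) \<theta> j)^2)"
proof -
  define s where "s j k = (1 / real n) * (\<Sum>i<n. g (x i) \<theta> j * g (x i) \<theta> k)" for j k
  have "sample_cov n r x g \<theta> = mat r r (\<lambda>(j, k). s j k)"
    by (simp add: sample_cov_def s_def)
  then have "c * (\<Sum>j<r. (l j)^2) \<le> quad_form r s l"
    using ev by (intro quad_form_ge_eigenvalue_lower_bound) (auto simp: s_def mult.commute)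
  then show ?thesis unfolding s_def quad_form_second_moment .
qed

section \<open>A deterministic bound for the EL objective\<close>

lemma ln_le_half_diff_inverse:
  fixes z :: real assumes z: "1 \<le> z"
  shows "ln z \<le> (z - inverse z) / 2"
proof -
  define h where "h y = (y - inverse y) / 2 - ln y" for y :: real
  have "h 1 \<le> h z"
  proof (rule DERIV_nonneg_imp_nondecreasing[OF z])
    fix y :: real assume y: "1 \<le> y" "y \<le> z"
    have d: "(h has_real_derivative ((1 + inverse y * inverse y) / 2 - inverse y)) (at y)"
      unfolding h_def using y
      by (intro derivative_eq_intros) (auto simp: inverse_eq_divide)
    have "(1 + inverse y * inverse y) / 2 - inverse y = (1 - inverse y)^2 / 2"
      using y by (simp add: power2_eq_square field_simps)
    with d show "\<exists>d. (h has_real_derivative d) (at y) \<and> 0 \<le> d" by auto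
  qed
  then show ?thesis by (simp add: h_def)
qed

lemma ln_one_plus_le_nonpos:
  fixes x :: real assumes x: "-1 < x" "x \<le> 0"
  shows "ln (1 + x) \<le> x - x^2 / 2"
proof -
  define h where "h y = y - y^2 / 2 - ln (1 + y)" for y :: real
  have "h 0 \<le> h x"
  proof (rule DERIV_nonpos_imp_nonincreasing[OF x(2)])
    fix y :: real assume y: "x \<le> y" "y \<le> 0"
    have d: "(h has_real_derivative (1 - y - 1 / (1 + y))) (at y)"
      unfolding h_def using y x
      by (auto intro!: derivative_eq_intros simp: power2_eq_square)
    have "1 - y - 1 / (1 + y) = - (y^2 / (1 + y))"
      using y x by (simp add: field_simps power2_eq_square)
    moreover have "y^2 / (1 + y) \<ge> 0" using y x by simp
    ultimately show "\<exists>d. (h has_real_derivative d) (at y) \<and> d \<le> 0" using d by auto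
  qed
  then show ?thesis by (simp add: h_def)
qed

lemma ln_one_plus_le_quadratic:
  fixes x m :: real assumes x: "-1 < x" "x \<le> m" and m: "0 \<le> m"
  shows "ln (1 + x) \<le> x - x^2 / (2 * (1 + m))"
proof (cases "x \<ge> 0")
  case True
  have "ln (1 + x) \<le> ((1 + x) - inverse (1 + x)) / 2"
    by (rule ln_le_half_diff_inverse) (use True in simp)
  also have "\<dots> = x - x^2 / (2 * (1 + x))"
    using True by (simp add: divide_simps power2_eq_square) (simp add: algebra_simps)
  also have "x^2 / (2 * (1 + m)) \<le> x^2 / (2 * (1 + x))"
    using True x by (intro divide_left_mono) auto
  then have "x - x^2 / (2 * (1 + x)) \<le> x - x^2 / (2 * (1 + m))" by simp
  finally show ?thesis .
next
  case False
  have "ln (1 + x) \<le> x - x^2 / 2" by (rule ln_one_plus_le_nonpos) (use x False in auto)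
  also have "x^2 / (2 * (1 + m)) \<le> x^2 / 2"
    using m by (intro divide_left_mono) auto
  then have "x - x^2 / 2 \<le> x - x^2 / (2 * (1 + m))" by simp
  finally show ?thesis .
qed

lemma linear_minus_quadratic_le:
  fixes c \<rho> s m :: real
  assumes c: "0 < c" and \<rho>: "0 \<le> \<rho>" and s: "0 \<le> s" and m: "0 \<le> m"
    and small: "s * m \<le> c * \<rho> / 4"
  shows "\<rho> * s - c * \<rho>^2 / (2 * (1 + m)) \<le> s^2 / c"
proof (cases "m \<le> 1")
  case True
  have "c * \<rho>^2 / 4 \<le> c * \<rho>^2 / (2 * (1 + m))"
    using True m c by (intro divide_left_mono) auto
  moreover have "0 \<le> (c * \<rho> / 2 - s)^2 / c" using c by simp
  then have "\<rho> * s \<le> c * \<rho>^2 / 4 + s^2 / c"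
    using c by (simp add: power2_eq_square field_simps)
  ultimately show ?thesis by linarith
next
  case False
  have "\<rho> * s * (4 * m) \<le> c * \<rho>^2"
    using mult_left_mono[OF small \<rho>] by (simp add: power2_eq_square algebra_simps)
  then have "\<rho> * s \<le> c * \<rho>^2 / (4 * m)" using False by (simp add: field_simps)
  also have "\<dots> \<le> c * \<rho>^2 / (2 * (1 + m))"
    using False c by (intro divide_left_mono) auto
  finally have "\<rho> * s - c * \<rho>^2 / (2 * (1 + m)) \<le> 0" by simp
  also have "0 \<le> s^2 / c" using c by simp
  finally show ?thesis .
qed

lemma mean_inner_le:
  fixes G :: "nat \<Rightarrow> nat \<Rightarrow> real" and l :: "nat \<Rightarrow> real"
  shows "(1 / real n) * (\<Sum>i<n. \<Sum>j<r. l j * G i j)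
    \<le> sqrt (\<Sum>j<r. (l j)^2) * sqrt ((\<Sum>j<r. (\<Sum>i<n. G i j)^2) / real n ^ 2)"
proof (rule power2_le_imp_le)
  have "((1 / real n) * (\<Sum>i<n. \<Sum>j<r. l j * G i j))^2 = (\<Sum>j<r. l j * ((\<Sum>i<n. G i j) / n))^2"
    by (subst sum.swap) (simp add: sum_divide_distrib sum_distrib_left mult.commute)
  also have "\<dots> \<le> (\<Sum>j<r. (l j)^2) * (\<Sum>j<r. ((\<Sum>i<n. G i j) / n)^2)"
    by (rule Cauchy_Schwarz_ineq_sum)
  also have "\<dots> = (sqrt (\<Sum>j<r. (l j)^2) * sqrt ((\<Sum>j<r. (\<Sum>i<n. G i j)^2) / real n ^ 2))^2"
    by (simp add: power_mult_distrib power_divide sum_nonneg flip: sum_divide_distrib)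
  finally show "((1 / real n) * (\<Sum>i<n. \<Sum>j<r. l j * G i j))^2
    \<le> (sqrt (\<Sum>j<r. (l j)^2) * sqrt ((\<Sum>j<r. (\<Sum>i<n. G i j)^2) / real n ^ 2))^2" .
qed (simp add: sum_nonneg)

lemma mean_ln_one_plus_inner_le:
  fixes G :: "nat \<Rightarrow> nat \<Rightarrow> real" and l :: "nat \<Rightarrow> real" and n r :: nat and b c :: real
  assumes n: "0 < n" and c: "0 < c" and b: "0 \<le> b"
    and quad: "c * (\<Sum>j<r. (l j)^2) \<le> (1 / real n) * (\<Sum>i<n. (\<Sum>j<r. l j * G i j)^2)"
    and bounded: "\<And>i. i < n \<Longrightarrow> (\<Sum>j<r. (G i j)^2) \<le> b"
    and small: "(\<Sum>j<r. (\<Sum>i<n. G i j)^2) / real n ^ 2 * b \<le> c^2 / 16"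
    and dom: "\<And>i. i < n \<Longrightarrow> -1 < (\<Sum>j<r. l j * G i j)"
  shows "(1 / real n) * (\<Sum>i<n. ln (1 + (\<Sum>j<r. l j * G i j))) \<le> (\<Sum>j<r. (\<Sum>i<n. G i j)^2) / real n ^ 2 / c"
proof -
  define x where "x i = (\<Sum>j<r. l j * G i j)" for i
  define \<rho> where "\<rho> = sqrt (\<Sum>j<r. (l j)^2)"
  define s where "s = sqrt ((\<Sum>j<r. (\<Sum>i<n. G i j)^2) / real n ^ 2)"
  define m where "m = \<rho> * sqrt b"
  have \<rho>: "0 \<le> \<rho>" "\<rho>^2 = (\<Sum>j<r. (l j)^2)" by (simp_all add: \<rho>_def sum_nonneg)
  have s: "0 \<le> s" "s^2 = (\<Sum>j<r. (\<Sum>i<n. G i j)^2) / real n ^ 2" by (simp_all add: s_def sum_nonneg)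
  have m: "0 \<le> m" using \<rho> b by (simp add: m_def)
  have x_le: "x i \<le> m" if i: "i < n" for i
  proof -
    have "(x i)^2 \<le> (\<Sum>j<r. (l j)^2) * (\<Sum>j<r. (G i j)^2)"
      unfolding x_def by (rule Cauchy_Schwarz_ineq_sum)
    also have "\<dots> \<le> \<rho>^2 * b"
      unfolding \<rho>(2) by (rule mult_left_mono[OF bounded[OF i]]) (simp add: sum_nonneg)
    finally have "(x i)^2 \<le> m^2" using b by (simp add: m_def power_mult_distrib)
    then show ?thesis using m by (rule power2_le_imp_le)
  qed
  have mean_le: "(1 / real n) * (\<Sum>i<n. x i) \<le> \<rho> * s"
    unfolding x_def \<rho>_def s_def by (rule mean_inner_le)
  have "(1 / real n) * (\<Sum>i<n. ln (1 + x i)) \<le> (1 / real n) * (\<Sum>i<n. x i - (x i)^2 / (2 * (1 + m)))"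
    using n dom by (intro mult_left_mono sum_mono ln_one_plus_le_quadratic x_le m) (auto simp: x_def)
  also have "\<dots> = (1 / real n) * (\<Sum>i<n. x i) - ((1 / real n) * (\<Sum>i<n. (x i)^2)) / (2 * (1 + m))"
    by (simp add: sum_subtractf sum_divide_distrib right_diff_distrib mult.commute)
  also have "\<dots> \<le> \<rho> * s - c * \<rho>^2 / (2 * (1 + m))"
  proof -
    have "c * \<rho>^2 / (2 * (1 + m)) \<le> ((1 / real n) * (\<Sum>i<n. (x i)^2)) / (2 * (1 + m))"
      using quad \<rho> m by (intro divide_right_mono) (auto simp: x_def)
    then show ?thesis using mean_le by linarith
  qed
  also have "\<dots> \<le> s^2 / c"
  proof (rule linear_minus_quadratic_le[OF c \<rho>(1) s(1) m])
    have "(s * sqrt b)^2 \<le> (c / 4)^2"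
      using small s b by (simp add: power_mult_distrib power_divide)
    then have "s * sqrt b \<le> c / 4" by (rule power2_le_imp_le) (use c in simp)
    then have "\<rho> * (s * sqrt b) \<le> \<rho> * (c / 4)" using \<rho>(1) by (rule mult_left_mono)
    then show "s * m \<le> c * \<rho> / 4" by (simp add: m_def algebra_simps)
  qed
  finally show ?thesis by (simp add: x_def s)
qed

lemma el_obj_le_of_small_mean:
  assumes n: "0 < n" and c: "0 < c" and b: "0 \<le> b" and V: "V \<subseteq> {-1<..}"
    and ev: "\<And>k. eigenvalue (sample_cov n r x g \<theta>) k \<Longrightarrow> c \<le> k"
    and bounded: "\<And>i. i < n \<Longrightarrow> (\<Sum>j<r. (g (x i) \<theta> j)^2) \<le> b"
    and small: "(\<Sum>j<r. (\<Sum>i<n. g (x i) \<theta> j)^2) / real n ^ 2 * b \<le> c^2 / 16"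
    and l: "l \<in> Lambda_hat n r x g V \<theta>"
  shows "el_obj n r x g \<theta> l \<le> (\<Sum>j<r. (\<Sum>i<n. g (x i) \<theta> j)^2) / real n ^ 2 / c"
  unfolding el_obj_def
proof (rule mean_ln_one_plus_inner_le[where G="\<lambda>i j. g (x i) \<theta> j" and l=l,
      OF n c b sample_cov_quadratic_lower_bound[of n r x g \<theta> c, OF ev] bounded small])
  show "-1 < (\<Sum>j<r. l j * g (x i) \<theta> j)" if "i < n" for i
    using l V that by (auto simp: Lambda_hat_def)
qed

section \<open>Moment bounds\<close>

lemma powr_sum_le_card_powr_sum:
  fixes a :: "'i \<Rightarrow> real" and p :: real
  assumes S: "finite S" and a: "\<And>i. i \<in> S \<Longrightarrow> 0 \<le> a i" and p: "1 \<le> p"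
  shows "(\<Sum>i\<in>S. a i) powr p \<le> real (card S) powr (p - 1) * (\<Sum>i\<in>S. a i powr p)"
proof -
  define J where "J = {i\<in>S. a i > 0}"
  have JS: "J \<subseteq> S" and J: "finite J" using S by (auto simp: J_def)
  have sumJ: "(\<Sum>i\<in>S. a i) = (\<Sum>i\<in>J. a i)"
    by (rule sum.mono_neutral_right[OF S JS]) (use a in \<open>force simp: J_def\<close>)
  have sumJp: "(\<Sum>i\<in>S. a i powr p) = (\<Sum>i\<in>J. a i powr p)"
    by (rule sum.mono_neutral_right[OF S JS]) (use a in \<open>force simp: J_def\<close>)
  show ?thesis
  proof (cases "J = {}")
    case True
    then show ?thesis using sumJ p by (simp add: sum_nonneg)
  next
    case False
    define k where "k = real (card J)"
    have k: "k > 0" using False J by (simp add: k_def card_gt_0_iff)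
    have "(\<Sum>i\<in>J. (1 / k) *\<^sub>R a i) powr p \<le> (\<Sum>i\<in>J. (1 / k) * a i powr p)"
      by (rule convex_on_sum[OF J False powr_convex[OF p]])
         (use J k False in \<open>auto simp: k_def J_def\<close>)
    then have "(\<Sum>i\<in>J. a i) powr p / k powr p \<le> (\<Sum>i\<in>J. a i powr p) / k"
      using k by (simp add: powr_divide sum_nonneg less_imp_le J_def flip: sum_divide_distrib)
    then have "(\<Sum>i\<in>J. a i) powr p \<le> k powr (p - 1) * (\<Sum>i\<in>J. a i powr p)"
      using k by (simp add: powr_diff field_simps)
    also have "\<dots> \<le> real (card S) powr (p - 1) * (\<Sum>i\<in>J. a i powr p)"
      using k p card_mono[OF S JS] by (intro mult_right_mono powr_mono2) (auto simp: k_def sum_nonneg)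
    finally show ?thesis using sumJ sumJp by simp
  qed
qed

lemma sq_le_one_plus_abs_powr:
  fixes y \<gamma> :: real assumes "2 \<le> \<gamma>"
  shows "y^2 \<le> 1 + \<bar>y\<bar> powr \<gamma>"
proof (cases "\<bar>y\<bar> \<le> 1")
  case True
  then have "y^2 \<le> 1" by (simp add: abs_square_le_1)
  then show ?thesis by (smt (verit) powr_ge_zero)
next
  case False
  then have "y^2 = \<bar>y\<bar> powr 2" by (simp add: powr_numeral)
  also have "\<dots> \<le> \<bar>y\<bar> powr \<gamma>" using False assms by (intro powr_mono) auto
  finally show ?thesis by simp
qed

lemma (in prob_space) integrable_of_nn_integral_le:
  assumes f: "f \<in> borel_measurable M" and nonneg: "\<And>\<omega>. 0 \<le> f \<omega>"
    and bound: "(\<integral>\<^sup>+\<omega>. ennreal (f \<omega>) \<partial>M) \<le> ennreal C" and C: "0 \<le> C"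
  shows "integrable M f" "expectation f \<le> C"
proof -
  show int: "integrable M f"
  proof (rule integrableI_bounded[OF f])
    have "(\<integral>\<^sup>+\<omega>. ennreal (norm (f \<omega>)) \<partial>M) = (\<integral>\<^sup>+\<omega>. ennreal (f \<omega>) \<partial>M)"
      using nonneg by simp
    also have "\<dots> < \<infinity>" using bound by (simp add: le_less_trans)
    finally show "(\<integral>\<^sup>+\<omega>. ennreal (norm (f \<omega>)) \<partial>M) < \<infinity>" .
  qed
  have "ennreal (expectation f) = (\<integral>\<^sup>+\<omega>. ennreal (f \<omega>) \<partial>M)"
    by (rule nn_integral_eq_integral[symmetric]) (use int nonneg in auto)
  then show "expectation f \<le> C" using bound C by (metis ennreal_le_iff)
qed

lemma (in prob_space) square_moment_le:
  fixes Z :: "'a \<Rightarrow> real"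
  assumes Zm: "Z \<in> borel_measurable M" and \<gamma>: "2 \<le> \<gamma>" and C: "0 \<le> C"
    and mom: "(\<integral>\<^sup>+\<omega>. ennreal (\<bar>Z \<omega>\<bar> powr \<gamma>) \<partial>M) \<le> ennreal C"
  shows "integrable M (\<lambda>\<omega>. (Z \<omega>)^2)" "expectation (\<lambda>\<omega>. (Z \<omega>)^2) \<le> 1 + C"
proof -
  have [measurable]: "(\<lambda>\<omega>. \<bar>Z \<omega>\<bar> powr \<gamma>) \<in> borel_measurable M" using Zm by measurable
  have "(\<integral>\<^sup>+\<omega>. ennreal ((Z \<omega>)^2) \<partial>M) \<le> (\<integral>\<^sup>+\<omega>. (1 + ennreal (\<bar>Z \<omega>\<bar> powr \<gamma>)) \<partial>M)"
  proof (rule nn_integral_mono)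
    fix \<omega>
    have "ennreal ((Z \<omega>)^2) \<le> ennreal (1 + \<bar>Z \<omega>\<bar> powr \<gamma>)"
      by (rule ennreal_leI) (rule sq_le_one_plus_abs_powr[OF \<gamma>])
    then show "ennreal ((Z \<omega>)^2) \<le> 1 + ennreal (\<bar>Z \<omega>\<bar> powr \<gamma>)" by (simp add: ennreal_plus)
  qed
  also have "\<dots> = 1 + (\<integral>\<^sup>+\<omega>. ennreal (\<bar>Z \<omega>\<bar> powr \<gamma>) \<partial>M)"
    by (subst nn_integral_add) (auto simp: emeasure_space_1)
  also have "\<dots> \<le> ennreal (1 + C)" using mom C by (simp add: ennreal_plus add_left_mono)
  finally have nn: "(\<integral>\<^sup>+\<omega>. ennreal ((Z \<omega>)^2) \<partial>M) \<le> ennreal (1 + C)" .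
  show "integrable M (\<lambda>\<omega>. (Z \<omega>)^2)" "expectation (\<lambda>\<omega>. (Z \<omega>)^2) \<le> 1 + C"
    using integrable_of_nn_integral_le[OF _ _ nn] Zm C by auto
qed

lemma (in prob_space) indep_var_compose_components:
  assumes ind: "indep_vars (\<lambda>_. S) X I" and ik: "i \<in> I" "k \<in> I" "i \<noteq> k"
    and fm: "f \<in> borel_measurable S" and hm: "h \<in> borel_measurable S"
  shows "indep_var borel (\<lambda>\<omega>. f (X i \<omega>)) borel (\<lambda>\<omega>. h (X k \<omega>))"
proof -
  have "indep_var (PiM {i} (\<lambda>_. S)) (\<lambda>\<omega>. restrict (\<lambda>i. X i \<omega>) {i})
                  (PiM {k} (\<lambda>_. S)) (\<lambda>\<omega>. restrict (\<lambda>i. X i \<omega>) {k})"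
    by (rule indep_var_restrict[OF ind]) (use ik in auto)
  then have "indep_var borel ((\<lambda>x. f (x i)) \<circ> (\<lambda>\<omega>. restrict (\<lambda>i. X i \<omega>) {i}))
                       borel ((\<lambda>x. h (x k)) \<circ> (\<lambda>\<omega>. restrict (\<lambda>i. X i \<omega>) {k}))"
    by (rule indep_var_compose)
       (auto intro!: measurable_compose[OF measurable_component_singleton[of i "{i}" "\<lambda>_. S"] fm]
                     measurable_compose[OF measurable_component_singleton[of k "{k}" "\<lambda>_. S"] hm])
  then show ?thesis by (simp add: comp_def)
qed

text \<open>Independence and zero means kill the cross terms of \<open>(\<Sum>\<^sub>i Y\<^sub>i)\<^sup>2\<close>.\<close>
lemma (in prob_space) expectation_sq_sum_indep:
  fixes Y :: "nat \<Rightarrow> 'a \<Rightarrow> real"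
  assumes Ym: "\<And>i. i < n \<Longrightarrow> Y i \<in> borel_measurable M"
    and sq_int: "\<And>i. i < n \<Longrightarrow> integrable M (\<lambda>\<omega>. (Y i \<omega>)^2)"
    and indep: "\<And>i k. i < n \<Longrightarrow> k < n \<Longrightarrow> i \<noteq> k \<Longrightarrow> indep_var borel (Y i) borel (Y k)"
    and mean: "\<And>i. i < n \<Longrightarrow> expectation (Y i) = 0"
  shows "integrable M (\<lambda>\<omega>. (\<Sum>i<n. Y i \<omega>)^2)"
    "expectation (\<lambda>\<omega>. (\<Sum>i<n. Y i \<omega>)^2) = (\<Sum>i<n. expectation (\<lambda>\<omega>. (Y i \<omega>)^2))"
proof -
  have Y_int: "integrable M (Y i)" if "i < n" for i
    using square_integrable_imp_integrable[OF Ym sq_int] that by simp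
  have prod_int: "integrable M (\<lambda>\<omega>. Y i \<omega> * Y k \<omega>)" if "i < n" "k < n" for i k
    using sq_int[OF that(1)] indep_var_integrable[OF indep] Y_int that
    by (cases "i = k") (auto simp: power2_eq_square)
  have prod_E: "expectation (\<lambda>\<omega>. Y i \<omega> * Y k \<omega>)
      = (if i = k then expectation (\<lambda>\<omega>. (Y i \<omega>)^2) else 0)" if "i < n" "k < n" for i k
  proof (cases "i = k")
    case False
    then have "expectation (\<lambda>\<omega>. Y i \<omega> * Y k \<omega>) = expectation (Y i) * expectation (Y k)"
      using indep_var_lebesgue_integral[OF indep] Y_int that by auto
    then show ?thesis using mean that False by simp
  qed (simp add: power2_eq_square)
  have sq_sum: "(\<Sum>i<n. Y i \<omega>)^2 = (\<Sum>i<n. \<Sum>k<n. Y i \<omega> * Y k \<omega>)" for \<omega>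
    by (simp add: power2_eq_square sum_product)
  show "integrable M (\<lambda>\<omega>. (\<Sum>i<n. Y i \<omega>)^2)"
    unfolding sq_sum by (intro Bochner_Integration.integrable_sum prod_int) auto
  have "expectation (\<lambda>\<omega>. (\<Sum>i<n. Y i \<omega>)^2) = (\<Sum>i<n. \<Sum>k<n. expectation (\<lambda>\<omega>. Y i \<omega> * Y k \<omega>))"
    unfolding sq_sum
    by (subst Bochner_Integration.integral_sum, auto intro!: Bochner_Integration.integrable_sum prod_int,
        rule sum.cong[OF refl], rule Bochner_Integration.integral_sum, auto intro!: prod_int)
  also have "\<dots> = (\<Sum>i<n. expectation (\<lambda>\<omega>. (Y i \<omega>)^2))"
    by (simp add: prod_E)
  finally show "expectation (\<lambda>\<omega>. (\<Sum>i<n. Y i \<omega>)^2) = (\<Sum>i<n. expectation (\<lambda>\<omega>. (Y i \<omega>)^2))" .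
qed

lemma (in prob_space) expectation_sq_sum_indep_le:
  fixes X :: "nat \<Rightarrow> 'a \<Rightarrow> 'x" and f :: "'x \<Rightarrow> real"
  assumes Xm: "\<And>i. i < n \<Longrightarrow> X i \<in> measurable M S"
    and ind: "indep_vars (\<lambda>_. S) X {..<n}"
    and fm: "f \<in> borel_measurable S"
    and mean: "\<And>i. i < n \<Longrightarrow> expectation (\<lambda>\<omega>. f (X i \<omega>)) = 0"
    and mom: "\<And>i. i < n \<Longrightarrow> (\<integral>\<^sup>+\<omega>. ennreal (\<bar>f (X i \<omega>)\<bar> powr \<gamma>) \<partial>M) \<le> ennreal C"
    and \<gamma>: "2 \<le> \<gamma>" and C: "0 \<le> C"
  shows "integrable M (\<lambda>\<omega>. (\<Sum>i<n. f (X i \<omega>))^2)"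
    "expectation (\<lambda>\<omega>. (\<Sum>i<n. f (X i \<omega>))^2) \<le> real n * (1 + C)"
proof -
  have Ym: "(\<lambda>\<omega>. f (X i \<omega>)) \<in> borel_measurable M" if "i < n" for i
    using measurable_compose[OF Xm fm] that by (simp add: comp_def)
  have sq: "integrable M (\<lambda>\<omega>. (f (X i \<omega>))^2)" "expectation (\<lambda>\<omega>. (f (X i \<omega>))^2) \<le> 1 + C"
    if "i < n" for i
    using square_moment_le[OF Ym[OF that] \<gamma> C mom[OF that]] by auto
  have indep: "indep_var borel (\<lambda>\<omega>. f (X i \<omega>)) borel (\<lambda>\<omega>. f (X k \<omega>))"
    if "i < n" "k < n" "i \<noteq> k" for i k
    using indep_var_compose_components[OF ind _ _ _ fm fm] that by auto
  note sum_sq = expectation_sq_sum_indep[where Y="\<lambda>i \<omega>. f (X i \<omega>)", OF Ym sq(1) indep mean]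
  show "integrable M (\<lambda>\<omega>. (\<Sum>i<n. f (X i \<omega>))^2)" using sum_sq(1) by simp
  have "expectation (\<lambda>\<omega>. (\<Sum>i<n. f (X i \<omega>))^2) = (\<Sum>i<n. expectation (\<lambda>\<omega>. (f (X i \<omega>))^2))"
    by (rule sum_sq(2))
  also have "\<dots> \<le> (\<Sum>i<n. 1 + C)" using sq(2) by (intro sum_mono) simp
  finally show "expectation (\<lambda>\<omega>. (\<Sum>i<n. f (X i \<omega>))^2) \<le> real n * (1 + C)" by simp
qed

lemma (in prob_space) expectation_sum_sq_sums_indep_le:
  fixes X :: "nat \<Rightarrow> 'a \<Rightarrow> 'x" and f :: "nat \<Rightarrow> 'x \<Rightarrow> real"
  assumes Xm: "\<And>i. i < n \<Longrightarrow> X i \<in> measurable M S"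
    and ind: "indep_vars (\<lambda>_. S) X {..<n}"
    and fm: "\<And>j. j < r \<Longrightarrow> f j \<in> borel_measurable S"
    and mean: "\<And>i j. i < n \<Longrightarrow> j < r \<Longrightarrow> expectation (\<lambda>\<omega>. f j (X i \<omega>)) = 0"
    and mom: "\<And>i j. i < n \<Longrightarrow> j < r \<Longrightarrow> (\<integral>\<^sup>+\<omega>. ennreal (\<bar>f j (X i \<omega>)\<bar> powr \<gamma>) \<partial>M) \<le> ennreal C"
    and \<gamma>: "2 \<le> \<gamma>" and C: "0 \<le> C"
  shows "integrable M (\<lambda>\<omega>. \<Sum>j<r. (\<Sum>i<n. f j (X i \<omega>))^2)"
    "expectation (\<lambda>\<omega>. \<Sum>j<r. (\<Sum>i<n. f j (X i \<omega>))^2) \<le> real n * real r * (1 + C)"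
proof -
  have coord: "integrable M (\<lambda>\<omega>. (\<Sum>i<n. f j (X i \<omega>))^2)"
      "expectation (\<lambda>\<omega>. (\<Sum>i<n. f j (X i \<omega>))^2) \<le> real n * (1 + C)" if "j < r" for j
    using expectation_sq_sum_indep_le[OF Xm ind fm[OF that] mean[OF _ that] mom[OF _ that] \<gamma> C]
    by auto
  show "integrable M (\<lambda>\<omega>. \<Sum>j<r. (\<Sum>i<n. f j (X i \<omega>))^2)"
    using coord(1) by auto
  have "expectation (\<lambda>\<omega>. \<Sum>j<r. (\<Sum>i<n. f j (X i \<omega>))^2)
      = (\<Sum>j<r. expectation (\<lambda>\<omega>. (\<Sum>i<n. f j (X i \<omega>))^2))"
    using coord(1) by (simp add: Bochner_Integration.integral_sum)
  also have "\<dots> \<le> (\<Sum>j<r. real n * (1 + C))" using coord(2) by (intro sum_mono) auto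
  finally show "expectation (\<lambda>\<omega>. \<Sum>j<r. (\<Sum>i<n. f j (X i \<omega>))^2) \<le> real n * real r * (1 + C)"
    by (simp add: mult_ac)
qed

lemma nn_integral_sum_sq_powr_le:
  fixes V :: "nat \<Rightarrow> 'a \<Rightarrow> real"
  assumes Vm: "\<And>j. j < r \<Longrightarrow> V j \<in> borel_measurable M"
    and mom: "\<And>j. j < r \<Longrightarrow> (\<integral>\<^sup>+\<omega>. ennreal (\<bar>V j \<omega>\<bar> powr \<gamma>) \<partial>M) \<le> ennreal C"
    and \<gamma>: "2 \<le> \<gamma>" and C: "0 \<le> C"
  shows "(\<integral>\<^sup>+\<omega>. ennreal ((\<Sum>j<r. (V j \<omega>)^2) powr (\<gamma> / 2)) \<partial>M) \<le> ennreal (real r powr (\<gamma> / 2) * C)"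
proof -
  define p where "p = \<gamma> / 2"
  have p: "1 \<le> p" using \<gamma> by (simp add: p_def)
  have Vpm[measurable]: "(\<lambda>\<omega>. \<bar>V j \<omega>\<bar> powr \<gamma>) \<in> borel_measurable M" if "j < r" for j
    using Vm[OF that] by measurable
  have pointwise: "(\<Sum>j<r. (V j \<omega>)^2) powr p \<le> real r powr (p - 1) * (\<Sum>j<r. \<bar>V j \<omega>\<bar> powr \<gamma>)" for \<omega>
  proof -
    have "((V j \<omega>)^2) powr p = \<bar>V j \<omega>\<bar> powr \<gamma>" for j
    proof -
      have sq_abs: "(V j \<omega>)^2 = \<bar>V j \<omega>\<bar> powr 2" by simp
      show ?thesis unfolding sq_abs powr_powr p_def by simp
    qed
    then show ?thesis
      using powr_sum_le_card_powr_sum[of "{..<r}" "\<lambda>j. (V j \<omega>)^2", OF _ _ p] by simp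
  qed
  have "(\<integral>\<^sup>+\<omega>. ennreal ((\<Sum>j<r. (V j \<omega>)^2) powr p) \<partial>M)
      \<le> (\<integral>\<^sup>+\<omega>. ennreal (real r powr (p - 1)) * (\<Sum>j<r. ennreal (\<bar>V j \<omega>\<bar> powr \<gamma>)) \<partial>M)"
  proof (rule nn_integral_mono)
    fix \<omega>
    have "ennreal ((\<Sum>j<r. (V j \<omega>)^2) powr p)
        \<le> ennreal (real r powr (p - 1) * (\<Sum>j<r. \<bar>V j \<omega>\<bar> powr \<gamma>))"
      by (rule ennreal_leI) (rule pointwise)
    then show "ennreal ((\<Sum>j<r. (V j \<omega>)^2) powr p)
        \<le> ennreal (real r powr (p - 1)) * (\<Sum>j<r. ennreal (\<bar>V j \<omega>\<bar> powr \<gamma>))"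
      by (simp add: ennreal_mult sum_nonneg)
  qed
  also have "\<dots> = ennreal (real r powr (p - 1)) * (\<Sum>j<r. (\<integral>\<^sup>+\<omega>. ennreal (\<bar>V j \<omega>\<bar> powr \<gamma>) \<partial>M))"
  proof -
    have "(\<lambda>\<omega>. \<Sum>j<r. ennreal (\<bar>V j \<omega>\<bar> powr \<gamma>)) \<in> borel_measurable M"
      by (intro borel_measurable_sum) (simp add: Vpm)
    moreover have "(\<integral>\<^sup>+\<omega>. (\<Sum>j<r. ennreal (\<bar>V j \<omega>\<bar> powr \<gamma>)) \<partial>M)
        = (\<Sum>j<r. (\<integral>\<^sup>+\<omega>. ennreal (\<bar>V j \<omega>\<bar> powr \<gamma>) \<partial>M))"
      by (rule nn_integral_sum) (simp add: Vpm)
    ultimately show ?thesis by (subst nn_integral_cmult) auto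
  qed
  also have "\<dots> \<le> ennreal (real r powr (p - 1)) * (\<Sum>j<r. ennreal C)"
    by (intro mult_left_mono sum_mono mom) auto
  also have "\<dots> = ennreal (real r powr p * C)"
    using C by (cases "r = 0")
      (simp_all add: powr_diff field_simps ennreal_of_nat_eq_real_of_nat flip: ennreal_mult)
  finally show ?thesis by (simp add: p_def)
qed

lemma (in prob_space) prob_sum_sq_gt_le:
  fixes V :: "nat \<Rightarrow> 'a \<Rightarrow> real"
  assumes Vm: "\<And>j. j < r \<Longrightarrow> V j \<in> borel_measurable M"
    and mom: "\<And>j. j < r \<Longrightarrow> (\<integral>\<^sup>+\<omega>. ennreal (\<bar>V j \<omega>\<bar> powr \<gamma>) \<partial>M) \<le> ennreal C"
    and \<gamma>: "2 \<le> \<gamma>" and C: "0 \<le> C" and b: "0 < b"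
  shows "prob {\<omega>\<in>space M. b < (\<Sum>j<r. (V j \<omega>)^2)} \<le> real r powr (\<gamma> / 2) * C / b powr (\<gamma> / 2)"
proof -
  define Z where "Z \<omega> = (\<Sum>j<r. (V j \<omega>)^2)" for \<omega>
  define p where "p = \<gamma> / 2"
  have p: "1 \<le> p" using \<gamma> by (simp add: p_def)
  have Zm[measurable]: "Z \<in> borel_measurable M" unfolding Z_def using Vm by measurable
  have "(\<lambda>\<omega>. Z \<omega> powr p) \<in> borel_measurable M" by measurable
  moreover have "0 \<le> real r powr p * C" using C by simp
  ultimately have Zp: "integrable M (\<lambda>\<omega>. Z \<omega> powr p)" "expectation (\<lambda>\<omega>. Z \<omega> powr p) \<le> real r powr p * C"
    using integrable_of_nn_integral_le[OF _ powr_ge_zero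
        nn_integral_sum_sq_powr_le[where V=V and r=r, OF Vm mom \<gamma> C, folded Z_def p_def]] by blast+
  have bp: "0 < b powr p" using b by simp
  have "prob {\<omega>\<in>space M. b < Z \<omega>} \<le> prob {\<omega>\<in>space M. b powr p \<le> Z \<omega> powr p}"
    using b p by (intro finite_measure_mono) (auto intro!: powr_mono2)
  also have "\<dots> \<le> expectation (\<lambda>\<omega>. Z \<omega> powr p) / b powr p"
    by (rule integral_Markov_inequality_measure[OF Zp(1) sets.top _ bp]) simp
  also have "\<dots> \<le> real r powr p * C / b powr p"
    using Zp(2) bp by (simp add: divide_right_mono)
  finally show ?thesis by (simp add: Z_def p_def)
qed

section \<open>The two tail events\<close>

text \<open>The thresholds are chosen so that each event has probability at most \<open>\<delta>\<close>; writing \<open>r + 1\<close>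
  instead of \<open>r\<close> keeps them positive when \<open>r = 0\<close>.\<close>

lemma (in prob_space) prob_sum_sq_sums_large_le:
  fixes X :: "nat \<Rightarrow> 'a \<Rightarrow> 'x" and f :: "nat \<Rightarrow> 'x \<Rightarrow> real"
  assumes Xm: "\<And>i. i < n \<Longrightarrow> X i \<in> measurable M S"
    and ind: "indep_vars (\<lambda>_. S) X {..<n}"
    and fm: "\<And>j. j < r \<Longrightarrow> f j \<in> borel_measurable S"
    and mean: "\<And>i j. i < n \<Longrightarrow> j < r \<Longrightarrow> expectation (\<lambda>\<omega>. f j (X i \<omega>)) = 0"
    and mom: "\<And>i j. i < n \<Longrightarrow> j < r \<Longrightarrow> (\<integral>\<^sup>+\<omega>. ennreal (\<bar>f j (X i \<omega>)\<bar> powr \<gamma>) \<partial>M) \<le> ennreal C"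
    and \<gamma>: "2 \<le> \<gamma>" and C: "0 \<le> C" and n: "0 < n" and \<delta>: "0 < \<delta>"
  defines "E \<equiv> {\<omega>\<in>space M. real n * (real r + 1) * (1 + C) / \<delta> \<le> (\<Sum>j<r. (\<Sum>i<n. f j (X i \<omega>))^2)}"
  shows "E \<in> events" "prob E \<le> \<delta>"
proof -
  define a where "a = real n * (real r + 1) * (1 + C) / \<delta>"
  note T = expectation_sum_sq_sums_indep_le[OF Xm ind fm mean mom \<gamma> C]
  have a: "0 < a" using n C \<delta> by (simp add: a_def)
  show "E \<in> events" unfolding E_def using borel_measurable_integrable[OF T(1)] by measurable
  have "prob E \<le> expectation (\<lambda>\<omega>. \<Sum>j<r. (\<Sum>i<n. f j (X i \<omega>))^2) / a"
    unfolding E_def a_def[symmetric]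
    by (rule integral_Markov_inequality_measure[OF T(1) _ _ a]) (auto intro!: sum_nonneg)
  also have "\<dots> \<le> real n * real r * (1 + C) / a" using T(2) a by (simp add: divide_right_mono)
  also have "\<dots> \<le> \<delta>"
  proof -
    have "real n * real r * (1 + C) \<le> real n * (real r + 1) * (1 + C)"
      using C by (intro mult_right_mono mult_left_mono) auto
    also have "\<dots> = a * \<delta>" using \<delta> by (simp add: a_def)
    finally show ?thesis using a by (simp add: divide_le_eq mult.commute)
  qed
  finally show "prob E \<le> \<delta>" .
qed

lemma (in prob_space) prob_max_sum_sq_large_le:
  fixes X :: "nat \<Rightarrow> 'a \<Rightarrow> 'x" and f :: "nat \<Rightarrow> 'x \<Rightarrow> real"
  assumes Xm: "\<And>i. i < n \<Longrightarrow> X i \<in> measurable M S"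
    and fm: "\<And>j. j < r \<Longrightarrow> f j \<in> borel_measurable S"
    and mom: "\<And>i j. i < n \<Longrightarrow> j < r \<Longrightarrow> (\<integral>\<^sup>+\<omega>. ennreal (\<bar>f j (X i \<omega>)\<bar> powr \<gamma>) \<partial>M) \<le> ennreal C"
    and \<gamma>: "2 \<le> \<gamma>" and C: "0 \<le> C" and n: "0 < n" and \<delta>: "0 < \<delta>"
  defines "E \<equiv> {\<omega>\<in>space M. \<exists>i<n. (real r + 1) * (real n * (1 + C) / \<delta>) powr (2 / \<gamma>)
                                       < (\<Sum>j<r. (f j (X i \<omega>))^2)}"
  shows "E \<in> events" "prob E \<le> \<delta>"
proof -
  define b where "b = (real r + 1) * (real n * (1 + C) / \<delta>) powr (2 / \<gamma>)"
  define F where "F i = {\<omega>\<in>space M. b < (\<Sum>j<r. (f j (X i \<omega>))^2)}" for i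
  have Ym: "(\<lambda>\<omega>. f j (X i \<omega>)) \<in> borel_measurable M" if "i < n" "j < r" for i j
    using measurable_compose[OF Xm fm] that by (simp add: comp_def)
  have F: "F i \<in> events" if "i < n" for i
    unfolding F_def using Ym[OF that] by measurable
  have E_eq: "E = (\<Union>i<n. F i)" by (auto simp: E_def F_def b_def)
  then show "E \<in> events" using F by auto
  have b: "0 < b" using n C \<delta> by (simp add: b_def)
  have "prob E \<le> (\<Sum>i<n. prob (F i))" unfolding E_eq by (rule finite_measure_subadditive_finite) (use F in auto)
  also have "\<dots> \<le> (\<Sum>i<n. real r powr (\<gamma> / 2) * C / b powr (\<gamma> / 2))"
    unfolding F_def using Ym mom \<gamma> C b by (intro sum_mono prob_sum_sq_gt_le) auto
  also have "\<dots> \<le> \<delta>"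
  proof -
    have "real r powr (\<gamma> / 2) * C \<le> (real r + 1) powr (\<gamma> / 2) * (1 + C)"
      using \<gamma> C by (intro mult_mono powr_mono2) auto
    then have "real n * (real r powr (\<gamma> / 2) * C) \<le> real n * ((real r + 1) powr (\<gamma> / 2) * (1 + C))"
      by (rule mult_left_mono) simp
    also have "\<dots> = \<delta> * b powr (\<gamma> / 2)"
      using n C \<delta> \<gamma> by (simp add: b_def powr_mult powr_powr)
    finally have "real n * (real r powr (\<gamma> / 2) * C) \<le> \<delta> * b powr (\<gamma> / 2)" .
    moreover have "0 < b powr (\<gamma> / 2)" using b by simp
    ultimately show ?thesis by (simp add: field_simps)
  qed
  finally show "prob E \<le> \<delta>" .
qed

lemma (in prob_space) prob_Diff_Un_ge:
  assumes A: "A \<in> events" and E1: "E1 \<in> events" and E2: "E2 \<in> events"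
  shows "prob A - prob E1 - prob E2 \<le> prob (A - (E1 \<union> E2))"
proof -
  have "prob A \<le> prob ((A - (E1 \<union> E2)) \<union> (E1 \<union> E2))"
    using A E1 E2 by (intro finite_measure_mono) auto
  also have "\<dots> \<le> prob (A - (E1 \<union> E2)) + prob (E1 \<union> E2)"
    using A E1 E2 by (intro measure_Un_le) auto
  also have "prob (E1 \<union> E2) \<le> prob E1 + prob E2"
    using E1 E2 by (rule measure_Un_le)
  finally show ?thesis by simp
qed

lemma SUP_el_obj_le_of_good_sample:
  assumes n: "0 < n" and c: "0 < c" and C: "0 \<le> C" and \<delta>: "0 < \<delta>" and V: "V \<subseteq> {-1<..}"
    and ev: "\<And>k. eigenvalue (sample_cov n r x g \<theta>) k \<Longrightarrow> c \<le> k"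
    and sums: "(\<Sum>j<r. (\<Sum>i<n. g (x i) \<theta> j)^2) \<le> real n * (real r + 1) * (1 + C) / \<delta>"
    and max: "\<And>i. i < n \<Longrightarrow> (\<Sum>j<r. (g (x i) \<theta> j)^2) \<le> (real r + 1) * (real n * (1 + C) / \<delta>) powr (2 / \<gamma>)"
    and rate: "(1 + C) / \<delta> * ((1 + C) / \<delta>) powr (2 / \<gamma>)
                 * ((real r + 1)^2 * real n powr (2 / \<gamma>) / real n) \<le> c^2 / 16"
  shows "(SUP l\<in>Lambda_hat n r x g V \<theta>. ereal (el_obj n r x g \<theta> l))
    \<le> ereal (2 * (1 + C) / (c * \<delta>) * real r / real n)"
proof (cases "r = 0")
  case True
  then show ?thesis by (auto intro!: SUP_least simp: el_obj_def)
next
  case False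
  define a where "a = real n * (real r + 1) * (1 + C) / \<delta>"
  define b where "b = (real r + 1) * (real n * (1 + C) / \<delta>) powr (2 / \<gamma>)"
  define T where "T = (\<Sum>j<r. (\<Sum>i<n. g (x i) \<theta> j)^2)"
  have "T / (real n)^2 * b \<le> a / (real n)^2 * b"
    using sums n by (intro mult_right_mono divide_right_mono) (auto simp: T_def a_def b_def)
  also have "\<dots> = (1 + C) / \<delta> * ((1 + C) / \<delta>) powr (2 / \<gamma>)
      * ((real r + 1)^2 * real n powr (2 / \<gamma>) / real n)"
  proof -
    have "(real n * (1 + C) / \<delta>) powr (2 / \<gamma>) = real n powr (2 / \<gamma>) * ((1 + C) / \<delta>) powr (2 / \<gamma>)"
      using C \<delta> by (simp add: powr_mult[symmetric])
    then show ?thesis using n by (simp add: a_def b_def power2_eq_square)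
  qed
  finally have small: "T / (real n)^2 * b \<le> c^2 / 16" using rate by linarith
  show ?thesis
  proof (rule SUP_least)
    fix l assume l: "l \<in> Lambda_hat n r x g V \<theta>"
    have "el_obj n r x g \<theta> l \<le> T / (real n)^2 / c"
      unfolding T_def
      by (rule el_obj_le_of_small_mean[OF n c _ V ev max small[unfolded T_def b_def] l])
         (use C \<delta> in simp)
    also have "\<dots> \<le> a / (real n)^2 / c"
      using sums c by (intro divide_right_mono) (auto simp: T_def a_def)
    also have "\<dots> = (1 + C) / (c * \<delta>) * (real r + 1) / real n"
      using n by (simp add: a_def power2_eq_square mult_ac)
    also have "\<dots> \<le> (1 + C) / (c * \<delta>) * (2 * real r) / real n"
      using False C c \<delta> by (intro divide_right_mono mult_left_mono) auto
    finally show "ereal (el_obj n r x g \<theta> l) \<le> ereal (2 * (1 + C) / (c * \<delta>) * real r / real n)"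
      by (simp add: algebra_simps)
  qed
qed

lemma (in prob_space) SUP_el_obj_le_with_high_prob:
  fixes X :: "nat \<Rightarrow> 'a \<Rightarrow> 'x" and g :: "'x \<Rightarrow> 'p \<Rightarrow> nat \<Rightarrow> real"
  assumes Xm: "\<And>i. i < n \<Longrightarrow> X i \<in> measurable M S"
    and ind: "indep_vars (\<lambda>_. S) X {..<n}"
    and gm: "\<And>j. j < r \<Longrightarrow> (\<lambda>x. g x \<theta> j) \<in> borel_measurable S"
    and mean: "\<And>i j. i < n \<Longrightarrow> j < r \<Longrightarrow> expectation (\<lambda>\<omega>. g (X i \<omega>) \<theta> j) = 0"
    and mom: "\<And>i j. i < n \<Longrightarrow> j < r \<Longrightarrow> (\<integral>\<^sup>+\<omega>. ennreal (\<bar>g (X i \<omega>) \<theta> j\<bar> powr \<gamma>) \<partial>M) \<le> ennreal C"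
    and A: "A \<in> events"
    and ev: "\<And>\<omega> k. \<omega> \<in> A \<Longrightarrow> eigenvalue (sample_cov n r (\<lambda>i. X i \<omega>) g \<theta>) k \<Longrightarrow> c \<le> k"
    and V: "V \<subseteq> {-1<..}"
    and \<gamma>: "2 \<le> \<gamma>" and C: "0 \<le> C" and c: "0 < c" and n: "0 < n" and \<delta>: "0 < \<delta>"
    and rate: "(1 + C) / \<delta> * ((1 + C) / \<delta>) powr (2 / \<gamma>)
                 * ((real r + 1)^2 * real n powr (2 / \<gamma>) / real n) \<le> c^2 / 16"
  shows "\<exists>B\<in>events. prob A - 2 * \<delta> \<le> prob B \<and>
    (\<forall>\<omega>\<in>B. (SUP l\<in>Lambda_hat n r (\<lambda>i. X i \<omega>) g V \<theta>. ereal (el_obj n r (\<lambda>i. X i \<omega>) g \<theta> l))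
       \<le> ereal (2 * (1 + C) / (c * \<delta>) * real r / real n))"
proof -
  define E1 where "E1 = {\<omega>\<in>space M. real n * (real r + 1) * (1 + C) / \<delta>
                                    \<le> (\<Sum>j<r. (\<Sum>i<n. g (X i \<omega>) \<theta> j)^2)}"
  define E2 where "E2 = {\<omega>\<in>space M. \<exists>i<n. (real r + 1) * (real n * (1 + C) / \<delta>) powr (2 / \<gamma>)
                                    < (\<Sum>j<r. (g (X i \<omega>) \<theta> j)^2)}"
  have E1: "E1 \<in> events" "prob E1 \<le> \<delta>"
    using prob_sum_sq_sums_large_le[where f="\<lambda>j x. g x \<theta> j" and n=n and r=r and X=X,
        OF Xm ind gm mean mom \<gamma> C n \<delta>]
    unfolding E1_def by blast+
  have E2: "E2 \<in> events" "prob E2 \<le> \<delta>"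
    using prob_max_sum_sq_large_le[where f="\<lambda>j x. g x \<theta> j" and n=n and r=r and X=X,
        OF Xm gm mom \<gamma> C n \<delta>]
    unfolding E2_def by blast+
  define B where "B = A - (E1 \<union> E2)"
  have "prob A - 2 * \<delta> \<le> prob B"
    using prob_Diff_Un_ge[OF A E1(1) E2(1)] E1(2) E2(2) by (simp add: B_def)
  moreover have "(SUP l\<in>Lambda_hat n r (\<lambda>i. X i \<omega>) g V \<theta>. ereal (el_obj n r (\<lambda>i. X i \<omega>) g \<theta> l))
       \<le> ereal (2 * (1 + C) / (c * \<delta>) * real r / real n)" if \<omega>: "\<omega> \<in> B" for \<omega>
  proof (rule SUP_el_obj_le_of_good_sample[OF n c C \<delta> V _ _ _ rate])
    have \<omega>M: "\<omega> \<in> space M" using \<omega> A sets.sets_into_space by (auto simp: B_def)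
    show "\<And>k. eigenvalue (sample_cov n r (\<lambda>i. X i \<omega>) g \<theta>) k \<Longrightarrow> c \<le> k"
      using \<omega> ev by (auto simp: B_def)
    show "(\<Sum>j<r. (\<Sum>i<n. g (X i \<omega>) \<theta> j)^2) \<le> real n * (real r + 1) * (1 + C) / \<delta>"
      using \<omega> \<omega>M by (auto simp: B_def E1_def)
    show "(\<Sum>j<r. (g (X i \<omega>) \<theta> j)^2) \<le> (real r + 1) * (real n * (1 + C) / \<delta>) powr (2 / \<gamma>)"
      if "i < n" for i
    proof -
      have "\<omega> \<notin> E2" using \<omega> by (simp add: B_def)
      then have "\<not> (real r + 1) * (real n * (1 + C) / \<delta>) powr (2 / \<gamma>) < (\<Sum>j<r. (g (X i \<omega>) \<theta> j)^2)"
        using \<omega>M that unfolding E2_def by blast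
      then show ?thesis by linarith
    qed
  qed
  moreover have "B \<in> events" unfolding B_def using A E1(1) E2(1) by auto
  ultimately show ?thesis by blast
qed

section \<open>Asymptotics\<close>

lemma dimension_rate_eventually_le:
  fixes r :: "nat \<Rightarrow> nat" and \<gamma> \<eta> :: real
  assumes \<gamma>: "2 < \<gamma>" and r_rate: "(\<lambda>n. real (r n)) \<in> o(\<lambda>n. real n powr (1/2 - 1/\<gamma>))"
    and \<eta>: "0 < \<eta>"
  shows "eventually (\<lambda>n. (real (r n) + 1)^2 * real n powr (2 / \<gamma>) / real n \<le> \<eta>) sequentially"
proof -
  define q where "q = 1/2 - 1/\<gamma>"
  define e where "e = sqrt \<eta>"
  have q: "0 < q" using \<gamma> by (simp add: q_def field_simps)
  have e: "0 < e" "e^2 = \<eta>" using \<eta> by (simp_all add: e_def)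
  have "eventually (\<lambda>n. norm (real (r n)) \<le> e / 2 * norm (real n powr q)) sequentially"
    using landau_o.smallD[OF r_rate[folded q_def], of "e / 2"] e by simp
  moreover have "eventually (\<lambda>n. nat \<lceil>(2 / e) powr (1 / q)\<rceil> + 1 \<le> n) sequentially"
    by (rule eventually_ge_at_top)
  ultimately show ?thesis
  proof eventually_elim
    case (elim n)
    have n: "0 < real n" using elim(2) by simp
    have "(2 / e) powr (1 / q) \<le> real n" using elim(2) by linarith
    then have "((2 / e) powr (1 / q)) powr q \<le> real n powr q"
      using q by (intro powr_mono2) auto
    then have "2 / e \<le> real n powr q" using q e by (simp add: powr_powr)
    then have "1 \<le> e / 2 * real n powr q" using e by (simp add: field_simps)
    moreover have "real (r n) \<le> e / 2 * real n powr q" using elim(1) by simp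
    ultimately have "real (r n) + 1 \<le> e * real n powr q" by linarith
    then have "(real (r n) + 1)^2 \<le> (e * real n powr q)^2" by (rule power_mono) simp
    also have "\<dots> = e^2 * real n powr (1 - 2 / \<gamma>)"
      using n by (simp add: power_mult_distrib powr_numeral[symmetric] powr_powr q_def algebra_simps)
    finally have "(real (r n) + 1)^2 * real n powr (2 / \<gamma>) / real n
        \<le> \<eta> * real n powr (1 - 2 / \<gamma>) * real n powr (2 / \<gamma>) / real n"
      using n e(2) by (intro divide_right_mono mult_right_mono) auto
    also have "\<dots> = \<eta>" using n by (simp add: mult.assoc powr_add[symmetric])
    finally show ?case .
  qed
qed

lemma dimension_rate_tendsto_0:
  fixes r :: "nat \<Rightarrow> nat" and \<gamma> :: real
  assumes \<gamma>: "2 < \<gamma>" and r_rate: "(\<lambda>n. real (r n)) \<in> o(\<lambda>n. real n powr (1/2 - 1/\<gamma>))"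
  shows "((\<lambda>n. (real (r n) + 1)^2 * real n powr (2 / \<gamma>) / real n) \<longlongrightarrow> 0) sequentially"
proof (rule order_tendstoI)
  show "eventually (\<lambda>n. a < (real (r n) + 1)^2 * real n powr (2 / \<gamma>) / real n) sequentially"
    if "a < 0" for a
  proof (intro always_eventually allI)
    fix n
    have "0 \<le> (real (r n) + 1)^2 * real n powr (2 / \<gamma>) / real n" by simp
    then show "a < (real (r n) + 1)^2 * real n powr (2 / \<gamma>) / real n" using that by linarith
  qed
  show "eventually (\<lambda>n. (real (r n) + 1)^2 * real n powr (2 / \<gamma>) / real n < a) sequentially"
    if "0 < a" for a
  proof -
    have "eventually (\<lambda>n. (real (r n) + 1)^2 * real n powr (2 / \<gamma>) / real n \<le> a / 2) sequentially"
      by (rule dimension_rate_eventually_le[OF \<gamma> r_rate]) (use that in simp)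
    then show ?thesis by eventually_elim (use that in linarith)
  qed
qed

lemma (in prob_space) SUP_el_obj_bounded_in_probability:
  fixes X :: "nat \<Rightarrow> nat \<Rightarrow> 'a \<Rightarrow> 'x" and g :: "nat \<Rightarrow> 'x \<Rightarrow> 'p \<Rightarrow> nat \<Rightarrow> real"
  assumes Xm: "\<And>n i. i < n \<Longrightarrow> X n i \<in> measurable M S"
    and ind: "\<And>n. indep_vars (\<lambda>_. S) (X n) {..<n}"
    and gm: "\<And>n j. j < r n \<Longrightarrow> (\<lambda>x. g n x \<theta> j) \<in> borel_measurable S"
    and mean: "\<And>n i j. i < n \<Longrightarrow> j < r n \<Longrightarrow> expectation (\<lambda>\<omega>. g n (X n i \<omega>) \<theta> j) = 0"
    and mom: "\<And>n i j. i < n \<Longrightarrow> j < r n \<Longrightarrow>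
      (\<integral>\<^sup>+\<omega>. ennreal (\<bar>g n (X n i \<omega>) \<theta> j\<bar> powr \<gamma>) \<partial>M) \<le> ennreal C"
    and A: "\<And>n. A n \<in> events" and A_lim: "(\<lambda>n. prob (A n)) \<longlonglongrightarrow> 1"
    and ev: "\<And>n \<omega> k. \<omega> \<in> A n \<Longrightarrow> eigenvalue (sample_cov n (r n) (\<lambda>i. X n i \<omega>) (g n) \<theta>) k \<Longrightarrow> c \<le> k"
    and V: "V \<subseteq> {-1<..}" and \<gamma>: "2 < \<gamma>" and C: "0 \<le> C" and c: "0 < c"
    and r_rate: "(\<lambda>n. real (r n)) \<in> o(\<lambda>n. real n powr (1/2 - 1/\<gamma>))"
    and \<epsilon>: "0 < \<epsilon>"
  shows "\<exists>K N. \<forall>n\<ge>N. \<exists>B\<in>events. 1 - \<epsilon> \<le> prob B \<and> (\<forall>\<omega>\<in>B.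
      (SUP l\<in>Lambda_hat n (r n) (\<lambda>i. X n i \<omega>) (g n) V \<theta>. ereal (el_obj n (r n) (\<lambda>i. X n i \<omega>) (g n) \<theta> l))
        \<le> ereal (K * real (r n) / real n))"
proof -
  define \<delta> where "\<delta> = \<epsilon> / 3"
  define Kc where "Kc = (1 + C) / \<delta> * ((1 + C) / \<delta>) powr (2 / \<gamma>)"
  have \<delta>: "0 < \<delta>" using \<epsilon> by (simp add: \<delta>_def)
  have "eventually (\<lambda>n. 1 - \<delta> < prob (A n)) sequentially"
    using order_tendstoD(1)[OF A_lim] \<delta> by simp
  moreover have "eventually (\<lambda>n. Kc * ((real (r n) + 1)^2 * real n powr (2 / \<gamma>) / real n)
      < c^2 / 16) sequentially"
    by (rule order_tendstoD(2)[OF tendsto_mult_right_zero[OF dimension_rate_tendsto_0[OF \<gamma> r_rate]]])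
      (use c in simp)
  moreover have "eventually (\<lambda>n. 0 < n) sequentially" by (rule eventually_gt_at_top)
  ultimately obtain N where N: "\<And>n. N \<le> n \<Longrightarrow> 1 - \<delta> < prob (A n) \<and> 0 < n \<and>
      Kc * ((real (r n) + 1)^2 * real n powr (2 / \<gamma>) / real n) < c^2 / 16"
    unfolding eventually_sequentially by (metis max.bounded_iff nle_le)
  have "\<exists>B\<in>events. 1 - \<epsilon> \<le> prob B \<and> (\<forall>\<omega>\<in>B.
      (SUP l\<in>Lambda_hat n (r n) (\<lambda>i. X n i \<omega>) (g n) V \<theta>. ereal (el_obj n (r n) (\<lambda>i. X n i \<omega>) (g n) \<theta> l))
        \<le> ereal (2 * (1 + C) / (c * \<delta>) * real (r n) / real n))"
    (is "\<exists>B\<in>events. _ \<and> ?good B") if "N \<le> n" for n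
  proof -
    have "\<exists>B\<in>events. prob (A n) - 2 * \<delta> \<le> prob B \<and> ?good B"
      using \<gamma> C c N[OF that]
      by (intro SUP_el_obj_le_with_high_prob[where S=S and \<gamma>=\<gamma>] V)
         (auto intro: Xm ind gm mean mom A ev \<delta> simp: Kc_def)
    then obtain B where "B \<in> events" "prob (A n) - 2 * \<delta> \<le> prob B" "?good B" by blast
    moreover have "1 - \<epsilon> \<le> prob B" using calculation(2) N[OF that] unfolding \<delta>_def by linarith
    ultimately show ?thesis by blast
  qed
  then show ?thesis by blast
qed

theorem mainTheorem2:
  fixes M :: "'a measure" and S :: "'x measure"
    and X :: "nat \<Rightarrow> nat \<Rightarrow> 'a \<Rightarrow> 'x"
    and g :: "nat \<Rightarrow> 'x \<Rightarrow> 'p \<Rightarrow> nat \<Rightarrow> real"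
    and r :: "nat \<Rightarrow> nat"
    and \<Theta> :: "'p set" and \<theta>0 :: 'p
    and V :: "real set" and C1 C2 \<gamma> :: real
  assumes prob: "prob_space M"
    and \<theta>0_in: "\<theta>0 \<in> \<Theta>"
    and V_open: "open V" and V_interval: "is_interval V" and V_zero: "0 \<in> V"
    and V_log_dom: "V \<subseteq> {-1<..}"
    and C1_pos: "C1 > 0" and C2_gt: "C2 > 1" and \<gamma>_gt: "\<gamma> > 2"
    and X_meas: "\<And>n i. i < n \<Longrightarrow> X n i \<in> measurable M S"
    and X_indep: "\<And>n. prob_space.indep_vars M (\<lambda>_. S) (X n) {..<n}"
    and X_ident: "\<And>n i i'. i < n \<Longrightarrow> i' < n \<Longrightarrow> distr M S (X n i) = distr M S (X n i')"
    and g_meas: "\<And>n \<theta> j. \<theta> \<in> \<Theta> \<Longrightarrow> j < r n \<Longrightarrow> (\<lambda>x. g n x \<theta> j) \<in> borel_measurable S"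
    and sup_meas: "\<And>n j. j < r n \<Longrightarrow>
          (\<lambda>x. SUP \<theta>\<in>\<Theta>. ennreal (\<bar>g n x \<theta> j\<bar> powr \<gamma>)) \<in> borel_measurable S"
    and mean_zero: "\<And>n i j. i < n \<Longrightarrow> j < r n \<Longrightarrow>
          prob_space.expectation M (\<lambda>\<omega>. g n (X n i \<omega>) \<theta>0 j) = 0"
    and moment: "\<And>n i j. i < n \<Longrightarrow> j < r n \<Longrightarrow>
          (\<integral>\<^sup>+ \<omega>. (SUP \<theta>\<in>\<Theta>. ennreal (\<bar>g n (X n i \<omega>) \<theta> j\<bar> powr \<gamma>)) \<partial>M) \<le> ennreal C1"
    and eigen: "\<exists>A :: nat \<Rightarrow> 'a set. (\<forall>n. A n \<in> sets M) \<and>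
          (\<lambda>n. measure M (A n)) \<longlonglongrightarrow> 1 \<and>
          (\<forall>n. \<forall>\<omega>\<in>A n. \<forall>\<theta>\<in>\<Theta>. \<forall>k. eigenvalue (sample_cov n (r n) (\<lambda>i. X n i \<omega>) (g n) \<theta>) k
               \<longrightarrow> 1 / C2 \<le> k \<and> k \<le> C2)"
    and r_rate: "(\<lambda>n. real (r n)) \<in> o(\<lambda>n. real n powr (1/2 - 1/\<gamma>))"
  shows "\<forall>\<epsilon>>0. \<exists>K. \<exists>N. \<forall>n\<ge>N. \<exists>B\<in>sets M. measure M B \<ge> 1 - \<epsilon> \<and>
           (\<forall>\<omega>\<in>B. (SUP l\<in>Lambda_hat n (r n) (\<lambda>i. X n i \<omega>) (g n) V \<theta>0.
                      ereal (el_obj n (r n) (\<lambda>i. X n i \<omega>) (g n) \<theta>0 l))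
                    \<le> ereal (K * real (r n) / real n))"
proof -
  interpret prob_space M by (rule prob)
  obtain A where A: "\<And>n. A n \<in> events" and A_lim: "(\<lambda>n. prob (A n)) \<longlonglongrightarrow> 1"
    and A_ev: "\<And>n \<omega> k. \<omega> \<in> A n \<Longrightarrow> eigenvalue (sample_cov n (r n) (\<lambda>i. X n i \<omega>) (g n) \<theta>0) k \<Longrightarrow> 1 / C2 \<le> k"
    using eigen \<theta>0_in by meson
  have mom: "(\<integral>\<^sup>+\<omega>. ennreal (\<bar>g n (X n i \<omega>) \<theta>0 j\<bar> powr \<gamma>) \<partial>M) \<le> ennreal C1"
    if "i < n" "j < r n" for n i j
    by (rule order_trans[OF nn_integral_mono moment[OF that]]) (rule SUP_upper[OF \<theta>0_in])
  show ?thesis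
    using C1_pos C2_gt
    by (intro allI impI SUP_el_obj_bounded_in_probability[where S=S and \<gamma>=\<gamma> and \<theta>=\<theta>0
          and A=A and c="1 / C2" and C=C1] V_log_dom)
       (auto intro: X_meas X_indep g_meas \<theta>0_in mean_zero mom A A_lim A_ev \<gamma>_gt r_rate)
qed

end
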